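(* Let $G$ be a simple directed graph on $[n]$ and $\sigma\subseteq[n]$, and suppose either $\sigma$ is a directed clique of $G$, or $\sigma$ contains a clique of $G$ of size $|\sigma|-1$. Then $\sigma$ is a stable motif (for a CTLN $W(G,\varepsilon,\delta)$ with legal parameters) if and only if $\sigma$ is a clique.
   Context: Let $G$ be a simple directed graph on $[n]=\{1,\dots,n\}$. Legal range: $\delta>0$, $0<\varepsilon<\frac{\delta}{\delta+1}$. The CTLN $W=W(G,\varepsilon,\delta)$ is the $n\times n$ matrix with $W_{ii}=0$, $W_{ij}=-1+\varepsilon$ if $j\to i$, $W_{ij}=-1-\delta$ if $i\neq j$ and $j\not\to i$; dynamics $\dot x_i=-x_i+[\sum_jW_{ij}x_j+\theta]_+$, $\theta>0$. CTLNs are assumed nondegenerate ($\det(I-W_\sigma)\ne0$ and all Cramer determinants for $(I-W_\sigma)x=\theta1_\sigma$ nonzero). $W_\sigma$ is the principal submatrix indexed by $\sigma$. $\sigma$ is a permitted motif if $\theta(I-W_\sigma)^{-1}1_\sigma$ has all entries positive; it is a stable motif if permitted and all eigenvalues of $I-W_\sigma$ have positive real part. A clique is a set of nodes pairwise bidirectionally connected. $\sigma$ is a directed clique if its nodes can be ordered $1,\dots,|\sigma|$ so that $i\to j$ in $G|_\sigma$ whenever $i<j$ (no constraint on edges $j\to i$ for $i<j$). *)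

theory Defs
  imports Complex_Main "Jordan_Normal_Form.Char_Poly" "Jordan_Normal_Form.Determinant"
begin

(* A simple directed graph on [n] = {1..n}: G i j means the edge i -> j. *)
definition simple_digraph :: "nat \<Rightarrow> (nat \<Rightarrow> nat \<Rightarrow> bool) \<Rightarrow> bool" where
  "simple_digraph n G \<longleftrightarrow> (\<forall>i j. G i j \<longrightarrow> i \<in> {1..n} \<and> j \<in> {1..n} \<and> i \<noteq> j)"

definition legal_params :: "real \<Rightarrow> real \<Rightarrow> bool" where
  "legal_params \<epsilon> \<delta> \<longleftrightarrow> \<delta> > 0 \<and> 0 < \<epsilon> \<and> \<epsilon> < \<delta> / (\<delta> + 1)"

(* CTLN weight matrix W(G,eps,delta): W i j is the weight from j to i *)
definition ctln_W :: "(nat \<Rightarrow> nat \<Rightarrow> bool) \<Rightarrow> real \<Rightarrow> real \<Rightarrow> nat \<Rightarrow> nat \<Rightarrow> real" where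
  "ctln_W G \<epsilon> \<delta> i j = (if i = j then 0 else if G j i then -1 + \<epsilon> else -1 - \<delta>)"

definition IminusW :: "(nat \<Rightarrow> nat \<Rightarrow> bool) \<Rightarrow> real \<Rightarrow> real \<Rightarrow> nat set \<Rightarrow> real mat" where
  "IminusW G \<epsilon> \<delta> \<sigma> =
     (let xs = sorted_list_of_set \<sigma> in
      mat (card \<sigma>) (card \<sigma>)
        (\<lambda>(a, b). (if a = b then 1 else 0) - ctln_W G \<epsilon> \<delta> (xs ! a) (xs ! b)))"

definition nondegenerate ::
  "nat \<Rightarrow> (nat \<Rightarrow> nat \<Rightarrow> bool) \<Rightarrow> real \<Rightarrow> real \<Rightarrow> real \<Rightarrow> bool" where
  "nondegenerate n G \<epsilon> \<delta> \<theta> \<longleftrightarrow>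
     (\<forall>\<tau> \<subseteq> {1..n}.
        det (IminusW G \<epsilon> \<delta> \<tau>) \<noteq> 0 \<and>
        (\<forall>k < card \<tau>. det (replace_col (IminusW G \<epsilon> \<delta> \<tau>) (vec (card \<tau>) (\<lambda>_. \<theta>)) k) \<noteq> 0))"

definition permitted_motif ::
  "(nat \<Rightarrow> nat \<Rightarrow> bool) \<Rightarrow> real \<Rightarrow> real \<Rightarrow> real \<Rightarrow> nat set \<Rightarrow> bool" where
  "permitted_motif G \<epsilon> \<delta> \<theta> \<sigma> \<longleftrightarrow>
     (\<exists>B. B \<in> carrier_mat (card \<sigma>) (card \<sigma>) \<and>
          inverts_mat (IminusW G \<epsilon> \<delta> \<sigma>) B \<and> inverts_mat B (IminusW G \<epsilon> \<delta> \<sigma>) \<and>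
          (\<forall>i < card \<sigma>. (\<theta> \<cdot>\<^sub>v (B *\<^sub>v vec (card \<sigma>) (\<lambda>_. 1))) $ i > 0))"

definition stable_motif ::
  "(nat \<Rightarrow> nat \<Rightarrow> bool) \<Rightarrow> real \<Rightarrow> real \<Rightarrow> real \<Rightarrow> nat set \<Rightarrow> bool" where
  "stable_motif G \<epsilon> \<delta> \<theta> \<sigma> \<longleftrightarrow>
     permitted_motif G \<epsilon> \<delta> \<theta> \<sigma> \<and>
     (\<forall>z. eigenvalue (map_mat complex_of_real (IminusW G \<epsilon> \<delta> \<sigma>)) z \<longrightarrow> Re z > 0)"

definition is_clique :: "(nat \<Rightarrow> nat \<Rightarrow> bool) \<Rightarrow> nat set \<Rightarrow> bool" where
  "is_clique G \<sigma> \<longleftrightarrow> (\<forall>i\<in>\<sigma>. \<forall>j\<in>\<sigma>. i \<noteq> j \<longrightarrow> G i j \<and> G j i)"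

definition directed_clique :: "(nat \<Rightarrow> nat \<Rightarrow> bool) \<Rightarrow> nat set \<Rightarrow> bool" where
  "directed_clique G \<sigma> \<longleftrightarrow>
     (\<exists>xs. distinct xs \<and> set xs = \<sigma> \<and>
           (\<forall>a b. a < b \<and> b < length xs \<longrightarrow> G (xs ! a) (xs ! b)))"

end

theory Submission
  imports Defs
begin

(*
  On a clique, I - W_sigma = eps I + (1 - eps) J has the eigenvalues eps and
  eps + (1 - eps) |sigma| and the positive fixed point theta / (eps + (1 - eps) |sigma|),
  so a clique is a stable motif.

  Conversely, if sigma is not a clique, one of two obstructions occurs.  Either some k
  graphically dominates some j in sigma (j -> k, k -/-> j, and every other in-neighbour
  of j in sigma is one of k as well); then subtracting the fixed point equations at j
  and k gives a sign contradiction, so sigma is not even permitted.  This always happens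
  for a directed clique, and for a clique tau plus a vertex v unless every edge out of v
  is reciprocated and some edge into v is missing.  In that last case I - W_sigma has a
  negative eigenvalue -mu: eliminating the clique coordinates reduces the eigenvalue
  equation to a scalar secular equation in mu, which changes sign on [0, infinity).
*)

lemma legal_params_bounds:
  assumes "legal_params \<epsilon> \<delta>"
  shows "0 < \<epsilon>" "\<epsilon> < 1" "0 < \<delta>"
proof -
  have \<delta>: "0 < \<delta>" and \<epsilon>: "0 < \<epsilon>" and "\<epsilon> + \<delta> * \<epsilon> < \<delta>"
    using assms by (auto simp: legal_params_def pos_less_divide_eq algebra_simps)
  moreover have "\<epsilon> \<ge> 1 \<Longrightarrow> \<delta> \<le> \<delta> * \<epsilon>"
    using \<delta> by simp
  ultimately show "0 < \<epsilon>" "\<epsilon> < 1" "0 < \<delta>"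
    by linarith+
qed

lemma ctln_W_simps:
  "ctln_W G \<epsilon> \<delta> i i = 0"
  "i \<noteq> j \<Longrightarrow> G j i \<Longrightarrow> ctln_W G \<epsilon> \<delta> i j = -1 + \<epsilon>"
  "i \<noteq> j \<Longrightarrow> \<not> G j i \<Longrightarrow> ctln_W G \<epsilon> \<delta> i j = -1 - \<delta>"
  unfolding ctln_W_def by auto

lemma IminusW_carrier [simp]: "IminusW G \<epsilon> \<delta> \<sigma> \<in> carrier_mat (card \<sigma>) (card \<sigma>)"
  by (simp add: IminusW_def Let_def)

lemma dim_IminusW [simp]:
  "dim_row (IminusW G \<epsilon> \<delta> \<sigma>) = card \<sigma>" "dim_col (IminusW G \<epsilon> \<delta> \<sigma>) = card \<sigma>"
  by (simp_all add: IminusW_def Let_def)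

lemma IminusW_index [simp]:
  assumes "i < card \<sigma>" and "j < card \<sigma>"
  shows "IminusW G \<epsilon> \<delta> \<sigma> $$ (i, j) = (if i = j then 1 else 0)
           - ctln_W G \<epsilon> \<delta> (sorted_list_of_set \<sigma> ! i) (sorted_list_of_set \<sigma> ! j)"
  using assms by (simp add: IminusW_def Let_def)

text \<open>\<open>IminusW\<close> indexes \<open>\<sigma>\<close> by its increasing enumeration, so vectors of that size are
  functions on \<open>\<sigma>\<close>; \<open>IminusW_fun\<close> below is \<open>I - W\<^sub>\<sigma>\<close> acting on such functions.\<close>

definition vec_on :: "nat set \<Rightarrow> (nat \<Rightarrow> 'a) \<Rightarrow> 'a vec" where
  "vec_on \<sigma> f = vec (card \<sigma>) (\<lambda>j. f (sorted_list_of_set \<sigma> ! j))"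

lemma vec_on_carrier [simp]: "vec_on \<sigma> f \<in> carrier_vec (card \<sigma>)"
  by (simp add: vec_on_def)

lemma all_nth_sorted_list_of_set:
  assumes "finite \<sigma>"
  shows "(\<forall>i<card \<sigma>. P (sorted_list_of_set \<sigma> ! i)) \<longleftrightarrow> (\<forall>p\<in>\<sigma>. P p)"
  using assms by (metis all_set_conv_all_nth length_sorted_list_of_set set_sorted_list_of_set)

lemma vec_on_eq_iff:
  assumes "finite \<sigma>"
  shows "vec_on \<sigma> f = vec_on \<sigma> g \<longleftrightarrow> (\<forall>p\<in>\<sigma>. f p = g p)"
proof -
  have "vec_on \<sigma> f = vec_on \<sigma> g \<longleftrightarrow>
      (\<forall>i<card \<sigma>. f (sorted_list_of_set \<sigma> ! i) = g (sorted_list_of_set \<sigma> ! i))"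
    by (auto simp: vec_on_def vec_eq_iff)
  also have "\<dots> \<longleftrightarrow> (\<forall>p\<in>\<sigma>. f p = g p)"
    by (rule all_nth_sorted_list_of_set[OF assms])
  finally show ?thesis .
qed

lemma vec_on_surj:
  assumes "finite \<sigma>" and "x \<in> carrier_vec (card \<sigma>)"
  shows "\<exists>f. x = vec_on \<sigma> f"
proof -
  let ?xs = "sorted_list_of_set \<sigma>"
  have "inj_on ((!) ?xs) {..<card \<sigma>}"
    using assms(1) by (intro inj_on_nth) auto
  then have "x = vec_on \<sigma> (\<lambda>l. x $ inv_into {..<card \<sigma>} ((!) ?xs) l)"
    using assms(2) by (auto simp: vec_on_def)
  then show ?thesis by blast
qed

lemma sum_sorted_list_of_set_nth:
  assumes "finite \<sigma>"
  shows "(\<Sum>j<card \<sigma>. f (sorted_list_of_set \<sigma> ! j)) = (\<Sum>l\<in>\<sigma>. f l)"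
proof -
  let ?xs = "sorted_list_of_set \<sigma>"
  have "bij_betw ((!) ?xs) {..<length ?xs} (set ?xs)"
    by (rule bij_betw_nth) auto
  then show ?thesis
    using assms sum.reindex_bij_betw by fastforce
qed

definition IminusW_fun ::
  "(nat \<Rightarrow> nat \<Rightarrow> bool) \<Rightarrow> real \<Rightarrow> real \<Rightarrow> nat set \<Rightarrow> (nat \<Rightarrow> 'a::real_algebra_1) \<Rightarrow> nat \<Rightarrow> 'a"
  where "IminusW_fun G \<epsilon> \<delta> \<sigma> f p = f p - (\<Sum>l\<in>\<sigma>. of_real (ctln_W G \<epsilon> \<delta> p l) * f l)"

lemma IminusW_mult_vec_on:
  fixes f :: "nat \<Rightarrow> 'a::real_algebra_1"
  assumes "finite \<sigma>"
  shows "map_mat of_real (IminusW G \<epsilon> \<delta> \<sigma>) *\<^sub>v vec_on \<sigma> f = vec_on \<sigma> (IminusW_fun G \<epsilon> \<delta> \<sigma> f)"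
proof (rule eq_vecI)
  let ?xs = "sorted_list_of_set \<sigma>"
  let ?M = "map_mat of_real (IminusW G \<epsilon> \<delta> \<sigma>)"
  fix i assume "i < dim_vec (vec_on \<sigma> (IminusW_fun G \<epsilon> \<delta> \<sigma> f))"
  then have i: "i < card \<sigma>" by (simp add: vec_on_def)
  have "(?M *\<^sub>v vec_on \<sigma> f) $ i
      = (\<Sum>j<card \<sigma>. of_real (IminusW G \<epsilon> \<delta> \<sigma> $$ (i, j)) * f (?xs ! j))"
    using i by (simp add: vec_on_def scalar_prod_def lessThan_atLeast0)
  also have "\<dots> = (\<Sum>j<card \<sigma>. (if i = j then f (?xs ! j) else 0)
                     - of_real (ctln_W G \<epsilon> \<delta> (?xs ! i) (?xs ! j)) * f (?xs ! j))"
    using i by (intro sum.cong refl) (simp add: left_diff_distrib)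
  also have "\<dots> = f (?xs ! i) - (\<Sum>j<card \<sigma>. of_real (ctln_W G \<epsilon> \<delta> (?xs ! i) (?xs ! j)) * f (?xs ! j))"
    using i by (simp add: sum_subtractf)
  also have "\<dots> = f (?xs ! i) - (\<Sum>l\<in>\<sigma>. of_real (ctln_W G \<epsilon> \<delta> (?xs ! i) l) * f l)"
    using sum_sorted_list_of_set_nth[OF assms, of "\<lambda>l. of_real (ctln_W G \<epsilon> \<delta> (?xs ! i) l) * f l"]
    by (simp only:)
  also have "\<dots> = vec_on \<sigma> (IminusW_fun G \<epsilon> \<delta> \<sigma> f) $ i"
    using i by (simp add: vec_on_def IminusW_fun_def)
  finally show "(?M *\<^sub>v vec_on \<sigma> f) $ i = vec_on \<sigma> (IminusW_fun G \<epsilon> \<delta> \<sigma> f) $ i" .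
qed (simp add: vec_on_def)

lemma IminusW_mult_vec_on_real:
  assumes "finite \<sigma>"
  shows "IminusW G \<epsilon> \<delta> \<sigma> *\<^sub>v vec_on \<sigma> f = vec_on \<sigma> (IminusW_fun G \<epsilon> \<delta> \<sigma> f)"
proof -
  have "map_mat of_real (IminusW G \<epsilon> \<delta> \<sigma>) = IminusW G \<epsilon> \<delta> \<sigma>"
    by (rule eq_matI) auto
  then show ?thesis
    using IminusW_mult_vec_on[OF assms, of G \<epsilon> \<delta> f] by simp
qed

lemma smult_vec_on: "a \<cdot>\<^sub>v vec_on \<sigma> f = vec_on \<sigma> (\<lambda>p. a * f p)"
  by (auto simp: vec_on_def)

lemma zero_vec_on: "0\<^sub>v (card \<sigma>) = vec_on \<sigma> (\<lambda>_. 0)"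
  by (auto simp: vec_on_def)

lemma eigenvalue_IminusW_iff:
  fixes z :: "'a::real_field"
  assumes "finite \<sigma>"
  shows "eigenvalue (map_mat of_real (IminusW G \<epsilon> \<delta> \<sigma>)) z \<longleftrightarrow>
    (\<exists>f. (\<exists>p\<in>\<sigma>. f p \<noteq> 0) \<and> (\<forall>p\<in>\<sigma>. IminusW_fun G \<epsilon> \<delta> \<sigma> f p = z * f p))"
proof -
  let ?M = "map_mat of_real (IminusW G \<epsilon> \<delta> \<sigma>) :: 'a mat"
  have eigenvector_vec_on: "eigenvector ?M (vec_on \<sigma> f) z \<longleftrightarrow>
      (\<exists>p\<in>\<sigma>. f p \<noteq> 0) \<and> (\<forall>p\<in>\<sigma>. IminusW_fun G \<epsilon> \<delta> \<sigma> f p = z * f p)" for f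
    using assms
    by (simp add: eigenvector_def IminusW_mult_vec_on smult_vec_on zero_vec_on vec_on_eq_iff)
  show ?thesis
  proof
    assume "eigenvalue ?M z"
    then obtain v where v: "eigenvector ?M v z"
      by (auto simp: eigenvalue_def)
    then have "v \<in> carrier_vec (card \<sigma>)"
      by (simp add: eigenvector_def)
    then obtain f where "v = vec_on \<sigma> f"
      using vec_on_surj[OF assms] by blast
    then have "eigenvector ?M (vec_on \<sigma> f) z"
      using v by simp
    then show "\<exists>f. (\<exists>p\<in>\<sigma>. f p \<noteq> 0) \<and> (\<forall>p\<in>\<sigma>. IminusW_fun G \<epsilon> \<delta> \<sigma> f p = z * f p)"
      unfolding eigenvector_vec_on by blast
  next
    assume "\<exists>f. (\<exists>p\<in>\<sigma>. f p \<noteq> 0) \<and> (\<forall>p\<in>\<sigma>. IminusW_fun G \<epsilon> \<delta> \<sigma> f p = z * f p)"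
    then obtain f where "eigenvector ?M (vec_on \<sigma> f) z"
      using eigenvector_vec_on by blast
    then show "eigenvalue ?M z"
      unfolding eigenvalue_def by blast
  qed
qed

lemma permitted_motif_fixed_point:
  assumes fin: "finite \<sigma>" and "permitted_motif G \<epsilon> \<delta> \<theta> \<sigma>"
  shows "\<exists>f. (\<forall>p\<in>\<sigma>. 0 < f p) \<and> (\<forall>p\<in>\<sigma>. IminusW_fun G \<epsilon> \<delta> \<sigma> f p = \<theta>)"
proof -
  let ?M = "IminusW G \<epsilon> \<delta> \<sigma>" and ?one = "vec (card \<sigma>) (\<lambda>_. 1 :: real)"
  obtain B where B: "B \<in> carrier_mat (card \<sigma>) (card \<sigma>)" and "inverts_mat ?M B"
    and pos: "\<forall>i < card \<sigma>. 0 < (\<theta> \<cdot>\<^sub>v (B *\<^sub>v ?one)) $ i"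
    using assms(2) unfolding permitted_motif_def by blast
  then have MB: "?M * B = 1\<^sub>m (card \<sigma>)"
    by (simp add: inverts_mat_def)
  have "\<theta> \<cdot>\<^sub>v (B *\<^sub>v ?one) \<in> carrier_vec (card \<sigma>)"
    using B by simp
  then obtain f where f: "\<theta> \<cdot>\<^sub>v (B *\<^sub>v ?one) = vec_on \<sigma> f"
    using vec_on_surj[OF fin] by blast
  have "vec_on \<sigma> (IminusW_fun G \<epsilon> \<delta> \<sigma> f) = ?M *\<^sub>v (\<theta> \<cdot>\<^sub>v (B *\<^sub>v ?one))"
    by (simp add: f IminusW_mult_vec_on_real[OF fin])
  also have "\<dots> = \<theta> \<cdot>\<^sub>v ((?M * B) *\<^sub>v ?one)"
    using B by (simp add: mult_mat_vec[OF IminusW_carrier] assoc_mult_mat_vec[OF IminusW_carrier B])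
  also have "\<dots> = vec_on \<sigma> (\<lambda>_. \<theta>)"
    by (auto simp: MB vec_on_def)
  finally have fixed: "\<forall>p\<in>\<sigma>. IminusW_fun G \<epsilon> \<delta> \<sigma> f p = \<theta>"
    by (simp only: vec_on_eq_iff[OF fin])
  have "\<forall>i<card \<sigma>. 0 < f (sorted_list_of_set \<sigma> ! i)"
    using pos unfolding f by (simp add: vec_on_def)
  then have "\<forall>p\<in>\<sigma>. 0 < f p"
    using all_nth_sorted_list_of_set[OF fin, of "\<lambda>p. 0 < f p"] by simp
  with fixed show ?thesis
    by blast
qed

lemma stable_motifI:
  assumes fin: "finite \<sigma>"
    and spectrum: "\<And>z. eigenvalue (map_mat complex_of_real (IminusW G \<epsilon> \<delta> \<sigma>)) z \<Longrightarrow> 0 < Re z"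
    and pos: "\<forall>p\<in>\<sigma>. 0 < f p" and fixed: "\<forall>p\<in>\<sigma>. IminusW_fun G \<epsilon> \<delta> \<sigma> f p = \<theta>"
  shows "stable_motif G \<epsilon> \<delta> \<theta> \<sigma>"
proof -
  let ?M = "IminusW G \<epsilon> \<delta> \<sigma>" and ?one = "vec (card \<sigma>) (\<lambda>_. 1 :: real)"
  have "det (map_mat complex_of_real ?M) \<noteq> 0"
  proof
    assume "det (map_mat complex_of_real ?M) = 0"
    then obtain v where v: "v \<in> carrier_vec (card \<sigma>)" "v \<noteq> 0\<^sub>v (card \<sigma>)"
      and "map_mat complex_of_real ?M *\<^sub>v v = 0\<^sub>v (card \<sigma>)"
      using det_0_iff_vec_prod_zero_field[of "map_mat complex_of_real ?M" "card \<sigma>"] by auto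
    moreover have "0 \<cdot>\<^sub>v v = 0\<^sub>v (card \<sigma>)"
      using v by auto
    ultimately have "eigenvector (map_mat complex_of_real ?M) v 0"
      by (simp add: eigenvector_def)
    then show False
      using spectrum[of 0] by (auto simp: eigenvalue_def)
  qed
  then have "?M \<in> Units (ring_mat TYPE(real) (card \<sigma>) ())"
    by (intro det_non_zero_imp_unit) auto
  then obtain B where B: "B \<in> carrier_mat (card \<sigma>) (card \<sigma>)"
    and BM: "B * ?M = 1\<^sub>m (card \<sigma>)" and MB: "?M * B = 1\<^sub>m (card \<sigma>)"
    by (auto simp: Units_def ring_mat_def)
  have "?M *\<^sub>v vec_on \<sigma> f = vec_on \<sigma> (\<lambda>_. \<theta>)"
    using fixed by (simp add: IminusW_mult_vec_on_real[OF fin] vec_on_eq_iff[OF fin])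
  moreover have "vec_on \<sigma> (\<lambda>_. \<theta>) = \<theta> \<cdot>\<^sub>v ?one"
    by (auto simp: vec_on_def)
  ultimately have "\<theta> \<cdot>\<^sub>v (B *\<^sub>v ?one) = B *\<^sub>v (?M *\<^sub>v vec_on \<sigma> f)"
    by (simp add: mult_mat_vec[OF B])
  also have "\<dots> = (B * ?M) *\<^sub>v vec_on \<sigma> f"
    using assoc_mult_mat_vec[OF B IminusW_carrier] by simp
  also have "\<dots> = vec_on \<sigma> f"
    by (simp add: BM)
  finally have "\<forall>i<card \<sigma>. 0 < (\<theta> \<cdot>\<^sub>v (B *\<^sub>v ?one)) $ i"
    using pos all_nth_sorted_list_of_set[OF fin, of "\<lambda>p. 0 < f p"] by (simp add: vec_on_def)
  then have "permitted_motif G \<epsilon> \<delta> \<theta> \<sigma>"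
    unfolding permitted_motif_def inverts_mat_def using B BM MB by auto
  then show ?thesis
    unfolding stable_motif_def using spectrum by blast
qed

lemma IminusW_fun_clique:
  fixes f :: "nat \<Rightarrow> 'a::real_algebra_1"
  assumes fin: "finite \<sigma>" and clique: "is_clique G \<sigma>" and p: "p \<in> \<sigma>"
  shows "IminusW_fun G \<epsilon> \<delta> \<sigma> f p = of_real \<epsilon> * f p + of_real (1 - \<epsilon>) * (\<Sum>l\<in>\<sigma>. f l)"
proof -
  have "(\<Sum>l\<in>\<sigma>. of_real (ctln_W G \<epsilon> \<delta> p l) * f l) = (\<Sum>l\<in>\<sigma> - {p}. of_real (\<epsilon> - 1) * f l)"
    using clique p by (auto simp: sum.remove[OF fin p] ctln_W_simps is_clique_def intro!: sum.cong)
  also have "\<dots> = of_real (\<epsilon> - 1) * ((\<Sum>l\<in>\<sigma>. f l) - f p)"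
    by (simp add: sum_distrib_left sum_diff1 fin p right_diff_distrib)
  finally show ?thesis
    by (simp add: IminusW_fun_def algebra_simps of_real_diff)
qed

lemma clique_eigenvalues:
  assumes fin: "finite \<sigma>" and clique: "is_clique G \<sigma>"
    and "eigenvalue (map_mat complex_of_real (IminusW G \<epsilon> \<delta> \<sigma>)) z"
  shows "z = \<epsilon> \<or> z = \<epsilon> + (1 - \<epsilon>) * card \<sigma>"
proof -
  obtain f p where p: "p \<in> \<sigma>" "f p \<noteq> 0"
    and eigen: "\<forall>q\<in>\<sigma>. IminusW_fun G \<epsilon> \<delta> \<sigma> f q = z * f q"
    using assms(3) eigenvalue_IminusW_iff[OF fin] by blast
  define S where "S = (\<Sum>l\<in>\<sigma>. f l)"
  have row: "z * f q = \<epsilon> * f q + (1 - \<epsilon>) * S" if "q \<in> \<sigma>" for q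
    using eigen that IminusW_fun_clique[OF fin clique that, of \<epsilon> \<delta> f] by (simp add: S_def)
  have "z * S = (\<Sum>q\<in>\<sigma>. z * f q)"
    by (simp add: S_def sum_distrib_left)
  also have "\<dots> = (\<Sum>q\<in>\<sigma>. \<epsilon> * f q + (1 - \<epsilon>) * S)"
    using row by (intro sum.cong) auto
  also have "\<dots> = \<epsilon> * S + card \<sigma> * ((1 - \<epsilon>) * S)"
    by (simp add: S_def sum.distrib sum_distrib_left)
  also have "\<dots> = (\<epsilon> + (1 - \<epsilon>) * card \<sigma>) * S"
    by (simp add: algebra_simps)
  finally have sum_row: "z * S = (\<epsilon> + (1 - \<epsilon>) * card \<sigma>) * S" .
  show ?thesis
  proof (cases "S = 0")
    case True
    then show ?thesis using row[OF p(1)] p(2) by simp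
  next
    case False
    then show ?thesis using sum_row by simp
  qed
qed

lemma clique_stable_motif:
  assumes fin: "finite \<sigma>" and legal: "legal_params \<epsilon> \<delta>" and "0 < \<theta>"
    and clique: "is_clique G \<sigma>"
  shows "stable_motif G \<epsilon> \<delta> \<theta> \<sigma>"
proof -
  define s where "s = \<epsilon> + (1 - \<epsilon>) * card \<sigma>"
  have "0 < \<epsilon>" "0 < s"
    using legal_params_bounds[OF legal] by (simp_all add: s_def add_pos_nonneg)
  show ?thesis
  proof (rule stable_motifI[OF fin, where f = "\<lambda>_. \<theta> / s"])
    fix z assume "eigenvalue (map_mat complex_of_real (IminusW G \<epsilon> \<delta> \<sigma>)) z"
    then have "z = \<epsilon> \<or> z = s"
      using clique_eigenvalues[OF fin clique] by (simp add: s_def)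
    then show "0 < Re z"
      using \<open>0 < \<epsilon>\<close> \<open>0 < s\<close> by auto
  next
    show "\<forall>p\<in>\<sigma>. 0 < \<theta> / s"
      using \<open>0 < \<theta>\<close> \<open>0 < s\<close> by simp
    have "IminusW_fun G \<epsilon> \<delta> \<sigma> (\<lambda>_. \<theta> / s) p = (\<epsilon> + (1 - \<epsilon>) * card \<sigma>) * (\<theta> / s)"
      if "p \<in> \<sigma>" for p
      using \<open>0 < s\<close> by (simp add: IminusW_fun_clique[OF fin clique that] field_simps)
    then show "\<forall>p\<in>\<sigma>. IminusW_fun G \<epsilon> \<delta> \<sigma> (\<lambda>_. \<theta> / s) p = \<theta>"
      using \<open>0 < s\<close> by (simp add: s_def)
  qed
qed

definition graph_dominates :: "(nat \<Rightarrow> nat \<Rightarrow> bool) \<Rightarrow> nat set \<Rightarrow> nat \<Rightarrow> nat \<Rightarrow> bool" where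
  "graph_dominates G \<sigma> k j \<longleftrightarrow>
     j \<in> \<sigma> \<and> k \<in> \<sigma> \<and> j \<noteq> k \<and> G j k \<and> \<not> G k j \<and> (\<forall>l\<in>\<sigma> - {j, k}. G l j \<longrightarrow> G l k)"

lemma graph_dominates_not_permitted:
  assumes fin: "finite \<sigma>" and legal: "legal_params \<epsilon> \<delta>" and dom: "graph_dominates G \<sigma> k j"
  shows "\<not> permitted_motif G \<epsilon> \<delta> \<theta> \<sigma>"
proof
  assume "permitted_motif G \<epsilon> \<delta> \<theta> \<sigma>"
  then obtain f where pos: "\<forall>p\<in>\<sigma>. 0 < f p" and fixed: "\<forall>p\<in>\<sigma>. IminusW_fun G \<epsilon> \<delta> \<sigma> f p = \<theta>"
    using permitted_motif_fixed_point[OF fin] by blast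
  let ?W = "ctln_W G \<epsilon> \<delta>"
  define R where "R = \<sigma> - {j, k}"
  have j: "j \<in> \<sigma>" and k: "k \<in> \<sigma>" and jk: "j \<noteq> k" and "G j k" "\<not> G k j"
    and in_j_imp_in_k: "\<forall>l\<in>R. G l j \<longrightarrow> G l k"
    using dom by (auto simp: graph_dominates_def R_def)
  have sum_split: "(\<Sum>l\<in>\<sigma>. g l) = g j + g k + (\<Sum>l\<in>R. g l)" for g :: "nat \<Rightarrow> real"
  proof -
    have "\<sigma> = insert j (insert k R)" "finite R" "k \<notin> R" "j \<notin> insert k R"
      using j k jk fin by (auto simp: R_def)
    then show ?thesis by simp
  qed
  have "IminusW_fun G \<epsilon> \<delta> \<sigma> f k = f k - ?W k j * f j - (\<Sum>l\<in>R. ?W k l * f l)"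
    "IminusW_fun G \<epsilon> \<delta> \<sigma> f j = f j - ?W j k * f k - (\<Sum>l\<in>R. ?W j l * f l)"
    by (simp_all add: IminusW_fun_def sum_split ctln_W_simps)
  moreover have "?W k j = -1 + \<epsilon>" "?W j k = -1 - \<delta>"
    using jk \<open>G j k\<close> \<open>\<not> G k j\<close> by (simp_all add: ctln_W_simps)
  moreover have "IminusW_fun G \<epsilon> \<delta> \<sigma> f k = IminusW_fun G \<epsilon> \<delta> \<sigma> f j"
    using fixed j k by simp
  moreover have "(\<Sum>l\<in>R. (?W k l - ?W j l) * f l) = (\<Sum>l\<in>R. ?W k l * f l) - (\<Sum>l\<in>R. ?W j l * f l)"
    by (simp add: left_diff_distrib sum_subtractf)
  ultimately have "- \<epsilon> * f j - \<delta> * f k = (\<Sum>l\<in>R. (?W k l - ?W j l) * f l)"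
    by (simp add: algebra_simps)
  also have "\<dots> \<ge> 0"
  proof (rule sum_nonneg)
    fix l assume "l \<in> R"
    then have "?W j l \<le> ?W k l"
      using in_j_imp_in_k legal_params_bounds[OF legal] by (auto simp: ctln_W_def R_def)
    then show "0 \<le> (?W k l - ?W j l) * f l"
      using pos \<open>l \<in> R\<close> by (simp add: R_def less_imp_le)
  qed
  moreover have "0 < \<epsilon> * f j" "0 < \<delta> * f k"
    using pos j k legal_params_bounds[OF legal] by simp_all
  ultimately show False
    by linarith
qed

lemma directed_clique_dominated:
  assumes "directed_clique G \<sigma>" and "\<not> is_clique G \<sigma>"
  shows "\<exists>j k. graph_dominates G \<sigma> k j"
proof -
  obtain xs where xs: "distinct xs" "set xs = \<sigma>"
    and forward: "\<And>a b. a < b \<Longrightarrow> b < length xs \<Longrightarrow> G (xs ! a) (xs ! b)"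
    using assms(1) unfolding directed_clique_def by blast
  txt \<open>The last node with a missing back edge receives edges from every other node, so it
    dominates the other end of that missing edge.\<close>
  define back_missing where
    "back_missing = {b. b < length xs \<and> (\<exists>a<b. \<not> G (xs ! b) (xs ! a))}"
  obtain i j where "i \<in> \<sigma>" "j \<in> \<sigma>" "i \<noteq> j" and missing: "\<not> (G i j \<and> G j i)"
    using assms(2) unfolding is_clique_def by blast
  then obtain a0 b0 where a0: "a0 < length xs" "xs ! a0 = i" and b0: "b0 < length xs" "xs ! b0 = j"
    using xs(2) by (auto simp: in_set_conv_nth)
  have "back_missing \<noteq> {}"
  proof (cases "a0 < b0")
    case True
    then have "b0 \<in> back_missing"
      using a0 b0 missing forward unfolding back_missing_def by blast
    then show ?thesis by blast
  next
    case False
    then have "b0 < a0"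
      using a0 b0 \<open>i \<noteq> j\<close> by (cases "a0 = b0") auto
    then have "a0 \<in> back_missing"
      using a0 b0 missing forward unfolding back_missing_def by blast
    then show ?thesis by blast
  qed
  moreover have "finite back_missing"
    unfolding back_missing_def by simp
  ultimately obtain b where "b \<in> back_missing" and b_max: "\<forall>c\<in>back_missing. c \<le> b"
    using Max_in Max_ge by blast
  then obtain a where ab: "a < b" "b < length xs" "\<not> G (xs ! b) (xs ! a)"
    unfolding back_missing_def by blast
  have "graph_dominates G \<sigma> (xs ! b) (xs ! a)"
    unfolding graph_dominates_def
  proof (intro conjI ballI impI)
    show "xs ! a \<in> \<sigma>" "xs ! b \<in> \<sigma>" "xs ! a \<noteq> xs ! b" "G (xs ! a) (xs ! b)" "\<not> G (xs ! b) (xs ! a)"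
      using ab xs forward by (auto simp: nth_eq_iff_index_eq)
    fix l assume l: "l \<in> \<sigma> - {xs ! a, xs ! b}"
    then obtain c where c: "c < length xs" "l = xs ! c"
      using xs(2) by (auto simp: in_set_conv_nth)
    then have "c \<noteq> b"
      using l by auto
    show "G l (xs ! b)"
    proof (cases "c < b")
      case True
      then show ?thesis using forward ab c by simp
    next
      case False
      then have "c \<notin> back_missing"
        using b_max \<open>c \<noteq> b\<close> by force
      then have "\<forall>a'<c. G (xs ! c) (xs ! a')"
        using c unfolding back_missing_def by auto
      moreover have "b < c"
        using False \<open>c \<noteq> b\<close> by simp
      ultimately show ?thesis
        using c by simp
    qed
  qed
  then show ?thesis by blast
qed

lemma IminusW_fun_insert:
  assumes "finite \<tau>" and "v \<notin> \<tau>"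
  shows "IminusW_fun G \<epsilon> \<delta> (insert v \<tau>) f p
    = IminusW_fun G \<epsilon> \<delta> \<tau> f p - of_real (ctln_W G \<epsilon> \<delta> p v) * f v"
  using assms by (simp add: IminusW_fun_def)

lemma IminusW_fun_of_real:
  "IminusW_fun G \<epsilon> \<delta> \<sigma> (\<lambda>p. of_real (f p) :: 'a::real_algebra_1) p
    = of_real (IminusW_fun G \<epsilon> \<delta> \<sigma> f p)"
  by (simp add: IminusW_fun_def of_real_sum)

text \<open>Let \<open>\<tau>\<close> be a clique and \<open>v \<notin> \<tau>\<close>. For each \<open>\<mu>\<close>, the rows of
  \<open>(I - W + \<mu> I) w = 0\<close> indexed by \<open>\<tau>\<close> determine \<open>w\<close> on \<open>\<tau>\<close> from \<open>w v = 1\<close>; the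
  remaining row, that of \<open>v\<close>, becomes this scalar (Schur complement) equation in \<open>\<mu>\<close>.\<close>

definition clique_vertex_secular ::
  "(nat \<Rightarrow> nat \<Rightarrow> bool) \<Rightarrow> real \<Rightarrow> real \<Rightarrow> nat \<Rightarrow> nat set \<Rightarrow> real \<Rightarrow> real" where
  "clique_vertex_secular G \<epsilon> \<delta> v \<tau> \<mu> =
     1 + \<mu> - ((\<Sum>i\<in>\<tau>. ctln_W G \<epsilon> \<delta> v i * ctln_W G \<epsilon> \<delta> i v)
              - (1 - \<epsilon>) * (\<Sum>i\<in>\<tau>. ctln_W G \<epsilon> \<delta> v i) * (\<Sum>i\<in>\<tau>. ctln_W G \<epsilon> \<delta> i v)
                / (\<epsilon> + \<mu> + (1 - \<epsilon>) * card \<tau>))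
             / (\<epsilon> + \<mu>)"

lemma clique_vertex_eigenfunction:
  fixes \<epsilon> \<delta> \<mu> :: real
  assumes fin: "finite \<tau>" and clique: "is_clique G \<tau>" and v: "v \<notin> \<tau>"
    and d1: "\<epsilon> + \<mu> \<noteq> 0" and d2: "\<epsilon> + \<mu> + (1 - \<epsilon>) * card \<tau> \<noteq> 0"
    and root: "clique_vertex_secular G \<epsilon> \<delta> v \<tau> \<mu> = 0"
  shows "\<exists>w. w v = 1 \<and> (\<forall>p\<in>insert v \<tau>. IminusW_fun G \<epsilon> \<delta> (insert v \<tau>) w p = - \<mu> * w p)"
proof -
  let ?W = "ctln_W G \<epsilon> \<delta>"
  define a where "a = 1 - \<epsilon>"
  define C where "C = (\<Sum>i\<in>\<tau>. ?W i v)"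
  define d where "d = \<epsilon> + \<mu> + a * card \<tau>"
  define w where "w l = (if l = v then 1 else (?W l v - a * C / d) / (\<epsilon> + \<mu>))" for l
  have w_v: "w v = 1"
    by (simp add: w_def)
  have w_\<tau>: "w i = (?W i v - a * C / d) / (\<epsilon> + \<mu>)" if "i \<in> \<tau>" for i
    using v that by (auto simp: w_def)
  have "d \<noteq> 0"
    using d2 by (simp add: d_def a_def)
  have "(\<Sum>l\<in>\<tau>. w l) = (C - card \<tau> * (a * C / d)) / (\<epsilon> + \<mu>)"
    by (simp add: w_\<tau> C_def sum_divide_distrib[symmetric] sum_subtractf)
  also have "C - card \<tau> * (a * C / d) = C * (\<epsilon> + \<mu>) / d"
    using \<open>d \<noteq> 0\<close> by (simp add: d_def field_simps)
  also have "C * (\<epsilon> + \<mu>) / d / (\<epsilon> + \<mu>) = C / d"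
    using d1 by simp
  finally have sum_w: "(\<Sum>l\<in>\<tau>. w l) = C / d" .
  have row_\<tau>: "IminusW_fun G \<epsilon> \<delta> (insert v \<tau>) w i = - \<mu> * w i" if i: "i \<in> \<tau>" for i
  proof -
    have "IminusW_fun G \<epsilon> \<delta> (insert v \<tau>) w i = \<epsilon> * w i + a * (C / d) - ?W i v"
      using IminusW_fun_clique[OF fin clique i, of \<epsilon> \<delta> w]
      by (simp add: IminusW_fun_insert[OF fin v] sum_w a_def w_v)
    also have "\<dots> = - \<mu> * w i"
    proof -
      have "(\<epsilon> + \<mu>) * w i = ?W i v - a * C / d"
        using d1 by (simp add: w_\<tau>[OF i])
      then show ?thesis
        by (simp add: algebra_simps)
    qed
    finally show ?thesis .
  qed
  have "(\<Sum>l\<in>\<tau>. ?W v l * w l)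
      = ((\<Sum>l\<in>\<tau>. ?W v l * ?W l v) - a * (\<Sum>l\<in>\<tau>. ?W v l) * C / d) / (\<epsilon> + \<mu>)"
    by (simp add: w_\<tau> sum_divide_distrib[symmetric] sum_subtractf sum_distrib_left
        sum_distrib_right right_diff_distrib algebra_simps cong: sum.cong)
  also have "\<dots> = 1 + \<mu>"
    using root d1 by (simp add: clique_vertex_secular_def a_def C_def d_def field_simps)
  finally have "IminusW_fun G \<epsilon> \<delta> (insert v \<tau>) w v = - \<mu> * w v"
    by (simp add: IminusW_fun_def fin v ctln_W_simps w_v)
  then show ?thesis
    using row_\<tau> w_v by auto
qed

lemma secular_numerator_pos:
  fixes \<epsilon> \<delta> k p u :: real
  assumes \<epsilon>: "0 < \<epsilon>" "\<epsilon> < 1" and \<delta>: "0 < \<delta>" and p: "1 \<le> p" "p \<le> u" "u \<le> k"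
  defines "a \<equiv> 1 - \<epsilon>" and "b \<equiv> \<epsilon> + \<delta>"
  shows "\<epsilon> * (\<epsilon> + a * k)
    < (\<epsilon> + a * k) * (k * a * a + a * b * p + a * b * u + b * b * p)
      - a * (k * a + b * p) * (k * a + b * u)"
proof -
  have "0 < a" "\<epsilon> < b" "0 < b"
    using \<epsilon> \<delta> by (simp_all add: a_def b_def)
  have "(\<epsilon> + a * k) * (k * a * a + a * b * p + a * b * u + b * b * p)
        - a * (k * a + b * p) * (k * a + b * u) - \<epsilon> * (\<epsilon> + a * k)
      = (a * (k - u) * (b * b * p) + \<epsilon> * a * u * b - \<epsilon> * \<epsilon> * a * k)
        + (\<epsilon> * (b * p * (a + b)) - \<epsilon> * \<epsilon>)"
    unfolding a_def b_def by (simp add: algebra_simps)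
  moreover have "\<epsilon> * \<epsilon> * a * k \<le> a * (k - u) * (b * b * p) + \<epsilon> * a * u * b"
  proof -
    have "\<epsilon> * \<epsilon> \<le> b * b" and "b * b \<le> b * b * p"
      using \<open>\<epsilon> < b\<close> \<epsilon> p by (simp_all add: mult_mono less_imp_le)
    then have "a * (k - u) * (\<epsilon> * \<epsilon>) \<le> a * (k - u) * (b * b * p)"
      using \<open>0 < a\<close> p by (intro mult_left_mono) auto
    moreover have "\<epsilon> * a * u * \<epsilon> \<le> \<epsilon> * a * u * b"
      using \<open>\<epsilon> < b\<close> \<open>0 < a\<close> \<epsilon> p by (intro mult_left_mono) auto
    moreover have "a * (k - u) * (\<epsilon> * \<epsilon>) + \<epsilon> * a * u * \<epsilon> = \<epsilon> * \<epsilon> * a * k"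
      by (simp add: algebra_simps)
    ultimately show ?thesis
      by linarith
  qed
  moreover have "\<epsilon> * \<epsilon> < \<epsilon> * (b * p * (a + b))"
  proof -
    have "b * (a + b) \<le> b * p * (a + b)"
      using \<open>0 < a\<close> \<open>0 < b\<close> p by (simp add: mult_le_cancel_left1 mult.commute mult.left_commute)
    moreover have "\<epsilon> < b * (a + b)"
    proof -
      have "b * (a + b) = b + b * \<delta>"
        by (simp add: a_def b_def algebra_simps)
      moreover have "0 < b * \<delta>"
        using \<open>0 < b\<close> \<delta> by simp
      ultimately show ?thesis
        using \<open>\<epsilon> < b\<close> by linarith
    qed
    ultimately show ?thesis
      using \<epsilon> by simp
  qed
  ultimately show ?thesis
    by linarith
qed

lemma clique_vertex_secular_root:
  fixes \<epsilon> \<delta> :: real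
  assumes legal: "legal_params \<epsilon> \<delta>" and fin: "finite \<tau>" and v: "v \<notin> \<tau>"
    and missing: "\<exists>i\<in>\<tau>. \<not> G i v" and reciprocal: "\<forall>i\<in>\<tau>. G v i \<longrightarrow> G i v"
  shows "\<exists>\<mu>>0. clique_vertex_secular G \<epsilon> \<delta> v \<tau> \<mu> = 0"
proof -
  note bounds = legal_params_bounds[OF legal]
  define a where "a = 1 - \<epsilon>"
  define b where "b = \<epsilon> + \<delta>"
  define k where "k = real (card \<tau>)"
  define p where "p = (\<Sum>i\<in>\<tau>. of_bool (\<not> G i v) :: real)"
  define u where "u = (\<Sum>i\<in>\<tau>. of_bool (\<not> G v i) :: real)"
  define RC where "RC = k * a * a + a * b * p + a * b * u + b * b * p"
  define g where
    "g \<mu> = 1 + \<mu> - (RC - a * (k * a + b * p) * (k * a + b * u) / (\<epsilon> + \<mu> + a * k)) / (\<epsilon> + \<mu>)"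
    for \<mu>
  have "0 < a" "0 < b"
    using bounds by (simp_all add: a_def b_def)
  have W_v: "ctln_W G \<epsilon> \<delta> v i = - (a + b * of_bool (\<not> G i v))"
    and W_i: "ctln_W G \<epsilon> \<delta> i v = - (a + b * of_bool (\<not> G v i))" if "i \<in> \<tau>" for i
    using that v by (auto simp: ctln_W_def a_def b_def)
  have "ctln_W G \<epsilon> \<delta> v i * ctln_W G \<epsilon> \<delta> i v
      = a * a + a * b * of_bool (\<not> G i v) + a * b * of_bool (\<not> G v i) + b * b * of_bool (\<not> G i v)"
    if "i \<in> \<tau>" for i
    using reciprocal that by (cases "G i v"; cases "G v i") (simp_all add: W_v W_i algebra_simps)
  then have RC_eq: "(\<Sum>i\<in>\<tau>. ctln_W G \<epsilon> \<delta> v i * ctln_W G \<epsilon> \<delta> i v) = RC"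
    by (simp add: RC_def k_def p_def u_def sum.distrib sum_distrib_left cong: sum.cong)
  have "(\<Sum>i\<in>\<tau>. ctln_W G \<epsilon> \<delta> v i) = - (k * a + b * p)"
    "(\<Sum>i\<in>\<tau>. ctln_W G \<epsilon> \<delta> i v) = - (k * a + b * u)"
    by (simp_all add: W_v W_i k_def p_def u_def sum_subtractf sum_distrib_left cong: sum.cong)
  then have RC_prod: "(1 - \<epsilon>) * (\<Sum>i\<in>\<tau>. ctln_W G \<epsilon> \<delta> v i) * (\<Sum>i\<in>\<tau>. ctln_W G \<epsilon> \<delta> i v)
      = a * (k * a + b * p) * (k * a + b * u)"
    by (simp only: a_def mult_minus_left mult_minus_right minus_minus)
  have secular_eq: "clique_vertex_secular G \<epsilon> \<delta> v \<tau> \<mu> = g \<mu>" for \<mu>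
    unfolding clique_vertex_secular_def g_def RC_eq RC_prod by (simp add: a_def k_def)
  have "1 \<le> p"
  proof -
    obtain i where "i \<in> \<tau>" "\<not> G i v"
      using missing by blast
    then show ?thesis
      using fin member_le_sum[of i \<tau> "\<lambda>i. of_bool (\<not> G i v) :: real"] by (simp add: p_def)
  qed
  moreover have "p \<le> u"
    unfolding p_def u_def using reciprocal by (intro sum_mono) auto
  moreover have "u \<le> k"
    unfolding u_def k_def using sum_mono[of \<tau> "\<lambda>i. of_bool (\<not> G v i) :: real" "\<lambda>_. 1"] by simp
  ultimately have "0 \<le> k" "0 < RC"
    using \<open>0 < a\<close> \<open>0 < b\<close> by (auto simp: RC_def intro!: add_nonneg_pos)
  have g_0: "g 0 < 0"
  proof -
    define s where "s = \<epsilon> + a * k"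
    have "0 < s"
      using bounds \<open>0 < a\<close> \<open>0 \<le> k\<close> by (simp add: s_def add_pos_nonneg)
    have "\<epsilon> * s < s * RC - a * (k * a + b * p) * (k * a + b * u)"
      using secular_numerator_pos[OF bounds(1,2,3) \<open>1 \<le> p\<close> \<open>p \<le> u\<close> \<open>u \<le> k\<close>]
      by (simp add: s_def RC_def a_def b_def)
    then have "\<epsilon> < RC - a * (k * a + b * p) * (k * a + b * u) / s"
      using \<open>0 < s\<close> by (simp add: field_simps)
    then show ?thesis
      using bounds by (simp add: g_def s_def field_simps)
  qed
  have g_RC: "0 < g RC"
  proof -
    have "0 \<le> a * (k * a + b * p) * (k * a + b * u) / (\<epsilon> + RC + a * k)"
      using \<open>0 < a\<close> \<open>0 < b\<close> \<open>0 \<le> k\<close> \<open>1 \<le> p\<close> \<open>p \<le> u\<close> \<open>0 < RC\<close> bounds by simp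
    then have "(RC - a * (k * a + b * p) * (k * a + b * u) / (\<epsilon> + RC + a * k)) / (\<epsilon> + RC) < 1"
      using \<open>0 < RC\<close> bounds by (simp add: divide_less_eq)
    then show ?thesis
      unfolding g_def using \<open>0 < RC\<close> by linarith
  qed
  have continuous: "continuous_on {0..RC} g"
  proof -
    have "0 \<le> a * k"
      using \<open>0 < a\<close> \<open>0 \<le> k\<close> by simp
    then show ?thesis
      unfolding g_def using bounds by (intro continuous_intros) auto
  qed
  obtain \<mu> where "0 \<le> \<mu>" "g \<mu> = 0"
    using IVT'[of g 0 0 RC, OF _ _ _ continuous] g_0 g_RC \<open>0 < RC\<close> by auto
  moreover have "\<mu> \<noteq> 0"
    using g_0 \<open>g \<mu> = 0\<close> by auto
  ultimately show ?thesis
    using secular_eq by (intro exI[of _ \<mu>]) auto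
qed

lemma clique_vertex_not_stable:
  fixes \<epsilon> \<delta> :: real
  assumes legal: "legal_params \<epsilon> \<delta>" and fin: "finite \<tau>" and clique: "is_clique G \<tau>"
    and v: "v \<notin> \<tau>" and "\<exists>i\<in>\<tau>. \<not> G i v" and "\<forall>i\<in>\<tau>. G v i \<longrightarrow> G i v"
  shows "\<not> stable_motif G \<epsilon> \<delta> \<theta> (insert v \<tau>)"
proof
  assume stable: "stable_motif G \<epsilon> \<delta> \<theta> (insert v \<tau>)"
  obtain \<mu> where "0 < \<mu>" and root: "clique_vertex_secular G \<epsilon> \<delta> v \<tau> \<mu> = 0"
    using clique_vertex_secular_root[OF legal fin v assms(5,6)] by blast
  have "0 < \<epsilon>" "0 \<le> (1 - \<epsilon>) * card \<tau>"
    using legal_params_bounds[OF legal] by simp_all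
  then have "\<epsilon> + \<mu> \<noteq> 0" "\<epsilon> + \<mu> + (1 - \<epsilon>) * card \<tau> \<noteq> 0"
    using \<open>0 < \<mu>\<close> by linarith+
  then obtain w where "w v = 1"
    and eigen: "\<forall>p\<in>insert v \<tau>. IminusW_fun G \<epsilon> \<delta> (insert v \<tau>) w p = - \<mu> * w p"
    using clique_vertex_eigenfunction[OF fin clique v _ _ root] by blast
  have "eigenvalue (map_mat complex_of_real (IminusW G \<epsilon> \<delta> (insert v \<tau>))) (of_real (- \<mu>))"
    unfolding eigenvalue_IminusW_iff[OF finite_insert[THEN iffD2, OF fin]]
    using \<open>w v = 1\<close> eigen
    by (intro exI[of _ "\<lambda>p. complex_of_real (w p)"]) (auto simp: IminusW_fun_of_real)
  then have "0 < Re (of_real (- \<mu>))"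
    using stable unfolding stable_motif_def by blast
  then show False
    using \<open>0 < \<mu>\<close> by simp
qed

lemma stable_motif_not_dominated:
  assumes "finite \<sigma>" and "legal_params \<epsilon> \<delta>" and "stable_motif G \<epsilon> \<delta> \<theta> \<sigma>"
  shows "\<not> graph_dominates G \<sigma> k j"
  using assms graph_dominates_not_permitted unfolding stable_motif_def by blast

lemma directed_clique_stable_motif_imp_clique:
  assumes "finite \<sigma>" and "legal_params \<epsilon> \<delta>" and "directed_clique G \<sigma>"
    and "stable_motif G \<epsilon> \<delta> \<theta> \<sigma>"
  shows "is_clique G \<sigma>"
  using assms directed_clique_dominated stable_motif_not_dominated by blast

lemma near_clique_stable_motif_imp_clique:
  fixes \<epsilon> \<delta> :: real
  assumes fin: "finite \<sigma>" and legal: "legal_params \<epsilon> \<delta>"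
    and \<tau>: "\<tau> \<subseteq> \<sigma>" "is_clique G \<tau>" "card \<tau> = card \<sigma> - 1"
    and stable: "stable_motif G \<epsilon> \<delta> \<theta> \<sigma>"
  shows "is_clique G \<sigma>"
proof (rule ccontr)
  assume not_clique: "\<not> is_clique G \<sigma>"
  then have "\<not> \<sigma> \<subseteq> \<tau>"
    using \<tau>(2) unfolding is_clique_def by blast
  then obtain v where v: "v \<in> \<sigma>" "v \<notin> \<tau>"
    by blast
  have "\<tau> = \<sigma> - {v}"
    using \<tau>(1,3) v fin by (intro card_subset_eq) auto
  then have \<sigma>: "\<sigma> = insert v \<tau>" and fin_\<tau>: "finite \<tau>"
    using v fin by auto
  have undominated: "\<not> graph_dominates G \<sigma> k j" for k j
    using stable_motif_not_dominated[OF fin legal stable] .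
  obtain i where i: "i \<in> \<tau>" "\<not> (G i v \<and> G v i)"
    using not_clique \<tau>(2) unfolding \<sigma> is_clique_def by blast
  show False
  proof (cases "\<exists>i\<in>\<tau>. G v i \<and> \<not> G i v")
    case True
    then obtain i where "i \<in> \<tau>" "G v i" "\<not> G i v" by blast
    then have "graph_dominates G \<sigma> i v"
      using v \<tau>(2) unfolding \<sigma> graph_dominates_def is_clique_def by auto
    then show False
      using undominated by blast
  next
    case no_one_way_out: False
    show False
    proof (cases "\<forall>i\<in>\<tau>. G i v")
      case True
      then have "graph_dominates G \<sigma> v i"
        using i v unfolding \<sigma> graph_dominates_def by auto
      then show False
        using undominated by blast
    next
      case False
      then have "\<not> stable_motif G \<epsilon> \<delta> \<theta> (insert v \<tau>)"
        using no_one_way_out clique_vertex_not_stable[OF legal fin_\<tau> \<tau>(2) v(2)] by blast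
      then show False
        using stable \<sigma> by simp
    qed
  qed
qed

theorem theorem4:
  fixes n :: nat and G :: "nat \<Rightarrow> nat \<Rightarrow> bool" and \<sigma> :: "nat set"
    and \<epsilon> \<delta> \<theta> :: real
  assumes "simple_digraph n G"
    and "\<sigma> \<subseteq> {1..n}"
    and "legal_params \<epsilon> \<delta>"
    and "\<theta> > 0"
    and "nondegenerate n G \<epsilon> \<delta> \<theta>"
    and "directed_clique G \<sigma> \<or>
         (\<exists>\<tau> \<subseteq> \<sigma>. is_clique G \<tau> \<and> card \<tau> = card \<sigma> - 1)"
  shows "stable_motif G \<epsilon> \<delta> \<theta> \<sigma> \<longleftrightarrow> is_clique G \<sigma>"
proof
  have fin: "finite \<sigma>"
    using assms(2) finite_subset by blast
  show "is_clique G \<sigma>" if "stable_motif G \<epsilon> \<delta> \<theta> \<sigma>"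
    using assms(6) directed_clique_stable_motif_imp_clique[OF fin assms(3) _ that]
      near_clique_stable_motif_imp_clique[OF fin assms(3) _ _ _ that] by blast
  show "stable_motif G \<epsilon> \<delta> \<theta> \<sigma>" if "is_clique G \<sigma>"
    using clique_stable_motif[OF fin assms(3,4) that] .
qed

end
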